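(* Let $\mathcal{A}=(A,\le,\wedge,1,\to)$ be a strong algebra whose monoidal structure is its meet structure and which internalizes its monoidal structure, i.e. $a\to(b\wedge c)=(a\to b)\wedge(a\to c)$ for all $a,b,c$. Then there exist a Kripke frame $\mathcal{K}=(W,\le_W,R)$ and a map $i:A\to U(W,\le_W)$ which preserves finite meets, is an order embedding, and satisfies $i(a\to b)=i(a)\to_{\mathcal{K}}i(b)$. Moreover, if $(A,\le)$ has all finite joins, is distributive, and $\to$ internalizes joins ($(a\vee b)\to c=(a\to c)\wedge(b\to c)$), then $i$ can be chosen to preserve finite joins as well. Finally, if $\mathcal{A}$ is the reduct of a temporal algebra, i.e. there is $\nabla:A\to A$ with $a\wedge\nabla b\le c$ iff $b\le a\to c$, then $i$ also satisfies $i(\nabla a)=\nabla_{\mathcal{K}}i(a)$, and for any $\mathcal{R}\subseteq\{N,H,P,F,wF\}$, if $(A,\le,\wedge,1,\nabla,\to)$ satisfies $\mathcal{R}$ then so does $\mathcal{K}$.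
   Context: An implication on a meet-semilattice with top $(A,\le,\wedge,1)$ is a map $\to:A^{op}\times A\to A$, antitone in the first and monotone in the second argument, with $1\le a\to a$ and $(a\to b)\wedge(b\to c)\le a\to c$; a strong algebra is such a structure. Distributive means binary meet distributes over finite joins. A Kripke frame is $(W,\le_W,R)$ with $(W,\le_W)$ a poset and $R\subseteq W\times W$ such that $(u,v)\in R$, $u'\le_W u$, $v\le_W v'$ imply $(u',v')\in R$. $U(W,\le_W)$ is the set of upsets of $(W,\le_W)$ ordered by inclusion, with meet $\cap$ and top $W$. For an upset $X$, $\nabla_{\mathcal{K}}X=\{v\in W\mid\exists u\in X\,(u,v)\in R\}$, and $X\to_{\mathcal{K}}Y=\{w\in W\mid\forall v\,((w,v)\in R\wedge v\in X\Rightarrow v\in Y)\}$, so that $X\cap\nabla_{\mathcal{K}}Y\subseteq Z$ iff $Y\subseteq X\to_{\mathcal{K}}Z$. The algebra satisfies: $(N)$ if $\nabla1=1$ and $\nabla(a\wedge b)=\nabla a\wedge\nabla b$; $(H)$ if $\nabla$ preserves all the structure, including $\nabla(a\to b)=\nabla a\to\nabla b$; $(P)$ if $\nabla a\le a$; $(F)$ if $a\le\nabla a$; $(wF)$ if $A$ has a least element $0$ and $\nabla a=0$ implies $a=0$. The frame satisfies: $(N)$ if there is an order-preserving $\pi:W\to W$ with $(u,v)\in R$ iff $u\le_W\pi(v)$; $(H)$ if moreover such $\pi$ is an order isomorphism; $(P)$ if $R\subseteq\le_W$; $(F)$ if $R$ is reflexive; $(wF)$ if $R$ is serial ($\forall u\,\exists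 v\,(u,v)\in R$). *)

theory Defs
  imports Main
begin

definition strong_algebra :: "('a::bounded_semilattice_inf_top \<Rightarrow> 'a \<Rightarrow> 'a) \<Rightarrow> bool" where
  "strong_algebra imp \<longleftrightarrow>
     (\<forall>a a' b. a' \<le> a \<longrightarrow> imp a b \<le> imp a' b) \<and>
     (\<forall>a b b'. b \<le> b' \<longrightarrow> imp a b \<le> imp a b') \<and>
     (\<forall>a. top \<le> imp a a) \<and>
     (\<forall>a b c. inf (imp a b) (imp b c) \<le> imp a c)"

definition internalizes_meets :: "('a::bounded_semilattice_inf_top \<Rightarrow> 'a \<Rightarrow> 'a) \<Rightarrow> bool" where
  "internalizes_meets imp \<longleftrightarrow> (\<forall>a b c. imp a (inf b c) = inf (imp a b) (imp a c))"

definition is_join :: "'a::order \<Rightarrow> 'a \<Rightarrow> 'a \<Rightarrow> bool" where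
  "is_join a b j \<longleftrightarrow> a \<le> j \<and> b \<le> j \<and> (\<forall>d. a \<le> d \<and> b \<le> d \<longrightarrow> j \<le> d)"

definition is_least :: "'a::order \<Rightarrow> bool" where
  "is_least z \<longleftrightarrow> (\<forall>x. z \<le> x)"

definition has_finite_joins :: "'a::order itself \<Rightarrow> bool" where
  "has_finite_joins _ \<longleftrightarrow> (\<exists>z::'a. is_least z) \<and> (\<forall>a b::'a. \<exists>j. is_join a b j)"

text \<open>Binary meet distributes over finite joins (the nullary case is automatic).\<close>
definition distributive :: "'a::bounded_semilattice_inf_top itself \<Rightarrow> bool" where
  "distributive _ \<longleftrightarrow> (\<forall>a b c j::'a. is_join b c j \<longrightarrow> is_join (inf a b) (inf a c) (inf a j))"

definition internalizes_joins :: "('a::bounded_semilattice_inf_top \<Rightarrow> 'a \<Rightarrow> 'a) \<Rightarrow> bool" where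
  "internalizes_joins imp \<longleftrightarrow> (\<forall>a b c j. is_join a b j \<longrightarrow> imp j c = inf (imp a c) (imp b c))"

definition temporal :: "('a::bounded_semilattice_inf_top \<Rightarrow> 'a \<Rightarrow> 'a) \<Rightarrow> ('a \<Rightarrow> 'a) \<Rightarrow> bool" where
  "temporal imp nabla \<longleftrightarrow> (\<forall>a b c. inf a (nabla b) \<le> c \<longleftrightarrow> b \<le> imp a c)"

datatype cond = N | H | P | F | wF

fun alg_sat :: "cond \<Rightarrow> ('a::bounded_semilattice_inf_top \<Rightarrow> 'a \<Rightarrow> 'a) \<Rightarrow> ('a \<Rightarrow> 'a) \<Rightarrow> bool" where
  "alg_sat N imp nabla \<longleftrightarrow> nabla top = top \<and> (\<forall>a b. nabla (inf a b) = inf (nabla a) (nabla b))"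
| "alg_sat H imp nabla \<longleftrightarrow> nabla top = top \<and> (\<forall>a b. nabla (inf a b) = inf (nabla a) (nabla b))
      \<and> (\<forall>a b. nabla (imp a b) = imp (nabla a) (nabla b))"
| "alg_sat P imp nabla \<longleftrightarrow> (\<forall>a. nabla a \<le> a)"
| "alg_sat F imp nabla \<longleftrightarrow> (\<forall>a. a \<le> nabla a)"
| "alg_sat wF imp nabla \<longleftrightarrow> (\<exists>z. is_least z \<and> (\<forall>a. nabla a = z \<longrightarrow> a = z))"

definition kripke_frame :: "'w set \<Rightarrow> ('w \<Rightarrow> 'w \<Rightarrow> bool) \<Rightarrow> ('w \<times> 'w) set \<Rightarrow> bool" where
  "kripke_frame W leW R \<longleftrightarrow>
     (\<forall>u\<in>W. leW u u) \<and>
     (\<forall>u\<in>W. \<forall>v\<in>W. leW u v \<and> leW v u \<longrightarrow> u = v) \<and>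
     (\<forall>u\<in>W. \<forall>v\<in>W. \<forall>w\<in>W. leW u v \<and> leW v w \<longrightarrow> leW u w) \<and>
     R \<subseteq> W \<times> W \<and>
     (\<forall>u v u' v'. (u, v) \<in> R \<and> u' \<in> W \<and> v' \<in> W \<and> leW u' u \<and> leW v v' \<longrightarrow> (u', v') \<in> R)"

definition upset :: "'w set \<Rightarrow> ('w \<Rightarrow> 'w \<Rightarrow> bool) \<Rightarrow> 'w set \<Rightarrow> bool" where
  "upset W leW X \<longleftrightarrow> X \<subseteq> W \<and> (\<forall>x\<in>X. \<forall>y\<in>W. leW x y \<longrightarrow> y \<in> X)"

definition knabla :: "'w set \<Rightarrow> ('w \<times> 'w) set \<Rightarrow> 'w set \<Rightarrow> 'w set" where
  "knabla W R X = {v \<in> W. \<exists>u\<in>X. (u, v) \<in> R}"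

definition kimp :: "'w set \<Rightarrow> ('w \<times> 'w) set \<Rightarrow> 'w set \<Rightarrow> 'w set \<Rightarrow> 'w set" where
  "kimp W R X Y = {w \<in> W. \<forall>v. (w, v) \<in> R \<and> v \<in> X \<longrightarrow> v \<in> Y}"

fun frame_sat :: "cond \<Rightarrow> 'w set \<Rightarrow> ('w \<Rightarrow> 'w \<Rightarrow> bool) \<Rightarrow> ('w \<times> 'w) set \<Rightarrow> bool" where
  "frame_sat N W leW R \<longleftrightarrow> (\<exists>\<pi>. \<pi> ` W \<subseteq> W \<and> (\<forall>u\<in>W. \<forall>v\<in>W. leW u v \<longrightarrow> leW (\<pi> u) (\<pi> v))
      \<and> (\<forall>u\<in>W. \<forall>v\<in>W. (u, v) \<in> R \<longleftrightarrow> leW u (\<pi> v)))"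
| "frame_sat H W leW R \<longleftrightarrow> (\<exists>\<pi>. bij_betw \<pi> W W \<and> (\<forall>u\<in>W. \<forall>v\<in>W. leW u v \<longleftrightarrow> leW (\<pi> u) (\<pi> v))
      \<and> (\<forall>u\<in>W. \<forall>v\<in>W. (u, v) \<in> R \<longleftrightarrow> leW u (\<pi> v)))"
| "frame_sat P W leW R \<longleftrightarrow> (\<forall>(u, v)\<in>R. leW u v)"
| "frame_sat F W leW R \<longleftrightarrow> (\<forall>u\<in>W. (u, u) \<in> R)"
| "frame_sat wF W leW R \<longleftrightarrow> (\<forall>u\<in>W. \<exists>v. (u, v) \<in> R)"

definition embedding_props ::
  "('a::bounded_semilattice_inf_top \<Rightarrow> 'a \<Rightarrow> 'a) \<Rightarrow> 'w set \<Rightarrow> ('w \<Rightarrow> 'w \<Rightarrow> bool) \<Rightarrow> ('w \<times> 'w) set \<Rightarrow> ('a \<Rightarrow> 'w set) \<Rightarrow> bool" where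
  "embedding_props imp W leW R i \<longleftrightarrow>
     (\<forall>a. upset W leW (i a)) \<and>
     i top = W \<and> (\<forall>a b. i (inf a b) = i a \<inter> i b) \<and>
     (\<forall>a b. a \<le> b \<longleftrightarrow> i a \<subseteq> i b) \<and>
     (\<forall>a b. i (imp a b) = kimp W R (i a) (i b))"

definition preserves_finite_joins :: "('a::order \<Rightarrow> 'w set) \<Rightarrow> bool" where
  "preserves_finite_joins i \<longleftrightarrow>
     (\<forall>z. is_least z \<longrightarrow> i z = {}) \<and> (\<forall>a b j. is_join a b j \<longrightarrow> i j = i a \<union> i b)"

end

(*
  Worlds are filters of A, and a is interpreted by the set of worlds containing it. A world v is
  an R-successor of u when v is closed under modus ponens for the implications in u; the frame
  order is inclusion, strengthened just enough to make R monotone. If a \<rightarrow> b is not in u, then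
  {c. a \<rightarrow> c \<in> u} is a successor containing a but not b, which gives i (a \<rightarrow> b) = i a \<rightarrow>\<^sub>K i b.
  When A is distributive with joins internalized by \<rightarrow>, every such separation can be done by
  prime filters (Zorn's lemma), and restricting to prime filters makes i preserve joins.
  If a temporal \<nabla> exists, it is the left adjoint of 1 \<rightarrow> _, and R u v holds iff \<nabla>[u] \<subseteq> v.
  The frame conditions are then read off from the algebraic ones; for N and H the map \<pi> is the
  preimage under \<nabla>, which is a lattice endomorphism (an automorphism with inverse 1 \<rightarrow> _ under H)
  and therefore maps worlds to worlds.
*)
theory Submission
  imports Defs
begin

definition meet_filter :: "'a::bounded_semilattice_inf_top set \<Rightarrow> bool" where
  "meet_filter G \<longleftrightarrow> top \<in> G \<and> (\<forall>x\<in>G. \<forall>y. x \<le> y \<longrightarrow> y \<in> G) \<and> (\<forall>x\<in>G. \<forall>y\<in>G. inf x y \<in> G)"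

definition prime_filter :: "'a::bounded_semilattice_inf_top set \<Rightarrow> bool" where
  "prime_filter G \<longleftrightarrow> meet_filter G \<and> (\<forall>z. is_least z \<longrightarrow> z \<notin> G) \<and>
     (\<forall>x y j. is_join x y j \<longrightarrow> j \<in> G \<longrightarrow> x \<in> G \<or> y \<in> G)"

lemma meet_filter_top: "meet_filter G \<Longrightarrow> top \<in> G"
  unfolding meet_filter_def by blast

lemma meet_filter_up: "meet_filter G \<Longrightarrow> x \<in> G \<Longrightarrow> x \<le> y \<Longrightarrow> y \<in> G"
  unfolding meet_filter_def by blast

lemma meet_filter_inf_iff: "meet_filter G \<Longrightarrow> inf x y \<in> G \<longleftrightarrow> x \<in> G \<and> y \<in> G"
  unfolding meet_filter_def by (meson inf.cobounded1 inf.cobounded2)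

lemma meet_filter_principal: "meet_filter {a..}"
  unfolding meet_filter_def by (auto intro: order.trans)

lemma meet_filter_UNIV: "meet_filter UNIV"
  unfolding meet_filter_def by blast

definition down_join_closed :: "'a::order set \<Rightarrow> bool" where
  "down_join_closed I \<longleftrightarrow>
     (\<forall>x\<in>I. \<forall>y. y \<le> x \<longrightarrow> y \<in> I) \<and> (\<forall>x y j. x \<in> I \<longrightarrow> y \<in> I \<longrightarrow> is_join x y j \<longrightarrow> j \<in> I)"

lemma down_join_closed_atMost: "down_join_closed {..b}"
proof -
  have "y \<le> b" if "x \<le> b" "y \<le> x" for x y :: 'a
    using that(2,1) by (rule order.trans)
  then show ?thesis unfolding down_join_closed_def is_join_def by auto
qed

text \<open>The prime filter theorem is proved once for an abstract entailment relation; it is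
  applied to \<open>(\<le>)\<close> and to \<open>\<lambda>x y. imp x y \<in> u\<close> for a filter \<open>u\<close>.\<close>

locale entailment =
  fixes ent :: "'a::bounded_semilattice_inf_top \<Rightarrow> 'a \<Rightarrow> bool"
  assumes ent_refl: "x \<le> y \<Longrightarrow> ent x y"
    and ent_trans: "ent x y \<Longrightarrow> ent y w \<Longrightarrow> ent x w"
    and ent_inf: "ent x y \<Longrightarrow> ent x w \<Longrightarrow> ent x (inf y w)"
    and ent_join: "ent x w \<Longrightarrow> ent y w \<Longrightarrow> is_join x y j \<Longrightarrow> ent j w"
begin

lemma ent_mono: "ent x y \<Longrightarrow> x' \<le> x \<Longrightarrow> y \<le> y' \<Longrightarrow> ent x' y'"
  by (meson ent_refl ent_trans)

definition ent_filter :: "'a set \<Rightarrow> bool" where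
  "ent_filter G \<longleftrightarrow> meet_filter G \<and> (\<forall>x\<in>G. \<forall>y. ent x y \<longrightarrow> y \<in> G)"

lemma ent_filter_Union:
  assumes "C \<noteq> {}" and chain: "subset.chain {G. ent_filter G} C"
  shows "ent_filter (\<Union>C)"
proof -
  have filters: "meet_filter G" "\<forall>x\<in>G. \<forall>y. ent x y \<longrightarrow> y \<in> G" if "G \<in> C" for G
    using chain that unfolding subset.chain_def ent_filter_def by blast+
  obtain G where "G \<in> C" using \<open>C \<noteq> {}\<close> by blast
  then have "top \<in> \<Union>C" using meet_filter_top[OF filters(1)] by blast
  moreover have "inf x y \<in> \<Union>C" if xy: "x \<in> \<Union>C" "y \<in> \<Union>C" for x y
  proof -
    obtain Gx Gy where G: "Gx \<in> C" "x \<in> Gx" "Gy \<in> C" "y \<in> Gy"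
      using xy by blast
    have "Gx \<subseteq> Gy \<or> Gy \<subseteq> Gx"
      using chain G(1,3) unfolding subset.chain_def by blast
    then show ?thesis
      using G filters(1) meet_filter_inf_iff by blast
  qed
  moreover have "y \<in> \<Union>C" if "x \<in> \<Union>C" "x \<le> y" for x y
    using that filters(1) meet_filter_up by blast
  moreover have "y \<in> \<Union>C" if "x \<in> \<Union>C" "ent x y" for x y
    using that filters(2) by blast
  ultimately show ?thesis
    unfolding ent_filter_def meet_filter_def by blast
qed

lemma ent_filter_adjoin:
  assumes "ent_filter M"
  shows "ent_filter {c. \<exists>m\<in>M. ent (inf m x) c}"
proof -
  have M: "meet_filter M" using assms unfolding ent_filter_def by blast
  show ?thesis
    unfolding ent_filter_def meet_filter_def
  proof (intro conjI ballI allI impI)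
    show "top \<in> {c. \<exists>m\<in>M. ent (inf m x) c}"
      using meet_filter_top[OF M] ent_refl[OF top_greatest] by blast
  next
    fix u v assume "u \<in> {c. \<exists>m\<in>M. ent (inf m x) c}" "v \<in> {c. \<exists>m\<in>M. ent (inf m x) c}"
    then obtain m m' where m: "m \<in> M" "ent (inf m x) u" "m' \<in> M" "ent (inf m' x) v" by blast
    have "ent (inf (inf m m') x) u" by (rule ent_mono[OF m(2)]) (auto intro: le_infI1)
    moreover have "ent (inf (inf m m') x) v" by (rule ent_mono[OF m(4)]) (auto intro: le_infI1)
    moreover have "inf m m' \<in> M" using M m meet_filter_inf_iff by blast
    ultimately show "inf u v \<in> {c. \<exists>m\<in>M. ent (inf m x) c}" using ent_inf by blast
  qed (auto intro: ent_mono ent_trans)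
qed

lemma ent_filter_maximal_prime:
  assumes dist: "distributive TYPE('a)" and joins: "\<forall>a b::'a. \<exists>j. is_join a b j"
    and I: "down_join_closed I"
    and M: "ent_filter M" "M \<inter> I = {}"
    and maximal: "\<And>G. ent_filter G \<Longrightarrow> G \<inter> I = {} \<Longrightarrow> M \<subseteq> G \<Longrightarrow> G = M"
    and "is_join x y j" "j \<in> M"
  shows "x \<in> M \<or> y \<in> M"
proof (rule ccontr)
  have MF: "meet_filter M" using M unfolding ent_filter_def by blast
  text \<open>Adjoining an element outside \<open>M\<close> must hit \<open>I\<close>, by maximality.\<close>
  have hits_I: "\<exists>m\<in>M. \<exists>c\<in>I. ent (inf m u) c" if "u \<notin> M" for u
  proof (rule ccontr)
    let ?Mu = "{c. \<exists>m\<in>M. ent (inf m u) c}"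
    assume "\<not> ?thesis"
    hence "?Mu \<inter> I = {}" by blast
    moreover have "M \<subseteq> ?Mu" using ent_refl[OF inf.cobounded1] by blast
    ultimately have "?Mu = M" using maximal ent_filter_adjoin[OF M(1)] by blast
    moreover have "u \<in> ?Mu" using meet_filter_top[OF MF] ent_refl[OF inf.cobounded2] by blast
    ultimately show False using that by blast
  qed
  assume "\<not> (x \<in> M \<or> y \<in> M)"
  then obtain m c m' c'
    where mc: "m \<in> M" "c \<in> I" "ent (inf m x) c" "m' \<in> M" "c' \<in> I" "ent (inf m' y) c'"
    using hits_I by meson
  obtain cc where cc: "is_join c c' cc" using joins by blast
  define mm where "mm = inf m m'"
  have "ent (inf mm x) cc"
    by (rule ent_mono[OF mc(3)]) (use cc in \<open>auto simp: mm_def is_join_def intro: le_infI1\<close>)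
  moreover have "ent (inf mm y) cc"
    by (rule ent_mono[OF mc(6)])
      (use cc in \<open>auto simp: mm_def is_join_def intro: le_infI1 le_infI2\<close>)
  moreover have "is_join (inf mm x) (inf mm y) (inf mm j)"
    using dist \<open>is_join x y j\<close> unfolding distributive_def by blast
  ultimately have "ent (inf mm j) cc" using ent_join by blast
  moreover have "inf mm j \<in> M" using mc \<open>j \<in> M\<close> MF meet_filter_inf_iff unfolding mm_def by blast
  ultimately have "cc \<in> M" using M(1) unfolding ent_filter_def by blast
  moreover have "cc \<in> I" using I mc cc unfolding down_join_closed_def by blast
  ultimately show False using M(2) by blast
qed

theorem prime_filter_extension:
  assumes dist: "distributive TYPE('a)" and joins: "\<forall>a b::'a. \<exists>j. is_join a b j"
    and I: "down_join_closed I" and "b \<in> I" and a: "\<And>c. c \<in> I \<Longrightarrow> \<not> ent a c"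
  shows "\<exists>G. prime_filter G \<and> (\<forall>x\<in>G. \<forall>y. ent x y \<longrightarrow> y \<in> G) \<and> a \<in> G \<and> G \<inter> I = {}"
proof -
  define Fam where "Fam = {G. ent_filter G \<and> a \<in> G \<and> G \<inter> I = {}}"
  have "{c. ent a c} \<in> Fam"
    unfolding Fam_def ent_filter_def meet_filter_def
    using a by (auto intro: ent_refl ent_trans ent_inf)
  moreover have "\<Union>C \<in> Fam" if C: "C \<noteq> {}" "subset.chain Fam C" for C
  proof -
    have "subset.chain {G. ent_filter G} C"
      using C(2) unfolding Fam_def subset.chain_def by blast
    with C(1) have "ent_filter (\<Union>C)" by (rule ent_filter_Union)
    moreover have "a \<in> \<Union>C" "\<Union>C \<inter> I = {}"
      using C unfolding Fam_def subset.chain_def by blast+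
    ultimately show ?thesis unfolding Fam_def by blast
  qed
  ultimately obtain M where "M \<in> Fam" and maximal: "\<forall>G\<in>Fam. M \<subseteq> G \<longrightarrow> G = M"
    using subset_Zorn_nonempty[of Fam] by blast
  hence M: "ent_filter M" "a \<in> M" "M \<inter> I = {}" unfolding Fam_def by auto
  have M_maximal: "G = M" if "ent_filter G" "G \<inter> I = {}" "M \<subseteq> G" for G
    using maximal that M(2) unfolding Fam_def by blast
  have "x \<in> M \<or> y \<in> M" if "is_join x y j" "j \<in> M" for x y j
    using ent_filter_maximal_prime[OF dist joins I M(1,3) M_maximal that] .
  moreover have "z \<notin> M" if "is_least z" for z
    using that I \<open>b \<in> I\<close> M(3) unfolding is_least_def down_join_closed_def by blast
  ultimately show ?thesis
    using M unfolding prime_filter_def ent_filter_def by blast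
qed

end

lemma strong_algebra_mono: "strong_algebra imp \<Longrightarrow> b \<le> b' \<Longrightarrow> imp a b \<le> imp a b'"
  unfolding strong_algebra_def by blast

lemma strong_algebra_trans: "strong_algebra imp \<Longrightarrow> inf (imp a b) (imp b c) \<le> imp a c"
  unfolding strong_algebra_def by blast

lemma strong_algebra_imp_top:
  assumes sa: "strong_algebra imp" and "a \<le> b"
  shows "imp a b = top"
proof (rule top_le)
  have "top \<le> imp a a" using sa unfolding strong_algebra_def by blast
  also have "\<dots> \<le> imp a b" using strong_algebra_mono[OF sa \<open>a \<le> b\<close>] .
  finally show "top \<le> imp a b" .
qed

lemma imp_mem_of_le: "strong_algebra imp \<Longrightarrow> meet_filter u \<Longrightarrow> x \<le> y \<Longrightarrow> imp x y \<in> u"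
  by (simp add: strong_algebra_imp_top meet_filter_top)

lemma imp_mem_trans:
  assumes sa: "strong_algebra imp" and u: "meet_filter u" and "imp x y \<in> u" "imp y w \<in> u"
  shows "imp x w \<in> u"
proof -
  have "inf (imp x y) (imp y w) \<in> u" using assms(3,4) meet_filter_inf_iff[OF u] by blast
  then show ?thesis using meet_filter_up[OF u] strong_algebra_trans[OF sa] by blast
qed

lemma imp_mem_inf:
  assumes im: "internalizes_meets imp" and u: "meet_filter u" and "imp x y \<in> u" "imp x w \<in> u"
  shows "imp x (inf y w) \<in> u"
  using assms meet_filter_inf_iff[OF u] unfolding internalizes_meets_def by simp

lemma meet_filter_imp_section:
  assumes sa: "strong_algebra imp" and im: "internalizes_meets imp" and u: "meet_filter u"
  shows "meet_filter {c. imp a c \<in> u}"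
  unfolding meet_filter_def
proof (intro conjI ballI allI impI)
  show "top \<in> {c. imp a c \<in> u}" using imp_mem_of_le[OF sa u top_greatest] by simp
  show "y \<in> {c. imp a c \<in> u}" if "x \<in> {c. imp a c \<in> u}" "x \<le> y" for x y
    using that imp_mem_trans[OF sa u _ imp_mem_of_le[OF sa u]] by blast
  show "inf x y \<in> {c. imp a c \<in> u}" if "x \<in> {c. imp a c \<in> u}" "y \<in> {c. imp a c \<in> u}" for x y
    using that imp_mem_inf[OF im u] by blast
qed

lemma inf_preserving_mono:
  fixes f :: "'a::semilattice_inf \<Rightarrow> 'b::semilattice_inf"
  assumes f_inf: "\<And>x y. f (inf x y) = inf (f x) (f y)" and "x \<le> y"
  shows "f x \<le> f y"
proof -
  have "f x = f (inf x y)" using \<open>x \<le> y\<close> by (simp add: le_iff_inf)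
  also have "\<dots> = inf (f x) (f y)" by (rule f_inf)
  finally show ?thesis by (rule ord_eq_le_trans[OF _ inf.cobounded2])
qed

lemma left_adjoint_is_join:
  assumes adj: "\<And>b c. f b \<le> c \<longleftrightarrow> b \<le> g c" and j: "is_join x y j"
  shows "is_join (f x) (f y) (f j)"
proof -
  have "j \<le> g (f j)" using adj[of j "f j"] by simp
  then have "x \<le> g (f j)" "y \<le> g (f j)"
    using j unfolding is_join_def by (blast intro: order.trans)+
  moreover have "j \<le> g d" if "x \<le> g d" "y \<le> g d" for d
    using j that unfolding is_join_def by blast
  ultimately show ?thesis
    unfolding is_join_def adj by blast
qed

lemma left_adjoint_least:
  assumes adj: "\<And>b c. f b \<le> c \<longleftrightarrow> b \<le> g c" and z: "is_least z"
  shows "f z = z"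
proof (rule order.antisym)
  show "f z \<le> z" using z unfolding adj is_least_def by blast
  show "z \<le> f z" using z unfolding is_least_def by blast
qed

lemma temporal_adjoint:
  assumes "temporal imp nabla"
  shows "nabla b \<le> c \<longleftrightarrow> b \<le> imp top c"
proof -
  have "inf top (nabla b) \<le> c \<longleftrightarrow> b \<le> imp top c"
    using assms unfolding temporal_def by blast
  then show ?thesis by simp
qed

lemma temporal_mono:
  assumes t: "temporal imp nabla" and "x \<le> y"
  shows "nabla x \<le> nabla y"
proof -
  have "y \<le> imp top (nabla y)" using temporal_adjoint[OF t, of y "nabla y"] by simp
  with \<open>x \<le> y\<close> have "x \<le> imp top (nabla y)" by (rule order.trans)
  then show ?thesis using temporal_adjoint[OF t] by blast
qed

lemma temporal_modus_ponens: "temporal imp nabla \<Longrightarrow> inf a (nabla (imp a b)) \<le> b"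
  unfolding temporal_def by blast

definition lattice_endo :: "('a::bounded_semilattice_inf_top \<Rightarrow> 'a) \<Rightarrow> bool" where
  "lattice_endo f \<longleftrightarrow> f top = top \<and> (\<forall>x y. f (inf x y) = inf (f x) (f y)) \<and>
     (\<forall>x y j. is_join x y j \<longrightarrow> is_join (f x) (f y) (f j)) \<and> (\<forall>z. is_least z \<longrightarrow> f z = z)"

lemma temporal_lattice_endo:
  assumes t: "temporal imp nabla" and "alg_sat N imp nabla"
  shows "lattice_endo nabla"
  using \<open>alg_sat N imp nabla\<close>
    left_adjoint_is_join[OF temporal_adjoint[OF t]] left_adjoint_least[OF temporal_adjoint[OF t]]
  unfolding lattice_endo_def alg_sat.simps by blast

lemma lattice_endo_inverse:
  assumes f: "lattice_endo f" and fg: "\<And>x. f (g x) = x" and gf: "\<And>x. g (f x) = x"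
  shows "lattice_endo g"
proof -
  have f_inf: "f (inf x y) = inf (f x) (f y)" for x y
    using f unfolding lattice_endo_def by blast
  have g_inf: "g (inf x y) = inf (g x) (g y)" for x y
  proof -
    have "g (inf x y) = g (f (inf (g x) (g y)))" by (simp add: f_inf fg)
    then show ?thesis by (simp add: gf)
  qed
  have adj: "g b \<le> c \<longleftrightarrow> b \<le> f c" for b c
  proof
    assume "g b \<le> c"
    then have "f (g b) \<le> f c" using f_inf by (rule inf_preserving_mono[rotated])
    then show "b \<le> f c" by (simp add: fg)
  next
    assume "b \<le> f c"
    then have "g b \<le> g (f c)" using g_inf by (rule inf_preserving_mono[rotated])
    then show "g b \<le> c" by (simp add: gf)
  qed
  have "g top = g (f top)" using f unfolding lattice_endo_def by simp
  then have "g top = top" by (simp add: gf)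
  then show ?thesis
    unfolding lattice_endo_def
    using g_inf left_adjoint_is_join[OF adj] left_adjoint_least[OF adj] by blast
qed

lemma meet_filter_vimage:
  assumes f: "lattice_endo f" and G: "meet_filter G"
  shows "meet_filter (f -` G)"
proof -
  have f_top: "f top = top" and f_inf: "\<And>x y. f (inf x y) = inf (f x) (f y)"
    using f unfolding lattice_endo_def by blast+
  have "f y \<in> G" if "f x \<in> G" "x \<le> y" for x y
    using meet_filter_up[OF G that(1) inf_preserving_mono[of f, OF f_inf that(2)]] .
  then show ?thesis
    using meet_filter_top[OF G] f_top f_inf meet_filter_inf_iff[OF G]
    unfolding meet_filter_def[of "f -` G"] by simp
qed

lemma prime_filter_vimage:
  assumes f: "lattice_endo f" and G: "prime_filter G"
  shows "prime_filter (f -` G)"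
  unfolding prime_filter_def
proof (intro conjI allI impI)
  show "meet_filter (f -` G)"
    using meet_filter_vimage[OF f] G unfolding prime_filter_def by blast
  show "z \<notin> f -` G" if "is_least z" for z
    using f G that unfolding lattice_endo_def prime_filter_def by simp
  show "x \<in> f -` G \<or> y \<in> f -` G" if "is_join x y j" "j \<in> f -` G" for x y j
  proof -
    have "is_join (f x) (f y) (f j)" using f that(1) unfolding lattice_endo_def by blast
    then show ?thesis using G that(2) unfolding prime_filter_def by simp
  qed
qed

definition mp_closed :: "('a \<Rightarrow> 'a \<Rightarrow> 'a) \<Rightarrow> 'a set \<Rightarrow> 'a set \<Rightarrow> bool" where
  "mp_closed imp u v \<longleftrightarrow> (\<forall>x y. imp x y \<in> u \<longrightarrow> x \<in> v \<longrightarrow> y \<in> v)"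

lemma mp_closed_iff_temporal:
  assumes t: "temporal imp nabla" and u: "meet_filter u" and v: "meet_filter v"
  shows "mp_closed imp u v \<longleftrightarrow> nabla ` u \<subseteq> v"
proof
  assume "mp_closed imp u v"
  moreover have "imp top (nabla x) \<in> u" if "x \<in> u" for x
    using meet_filter_up[OF u that] temporal_adjoint[OF t] by blast
  ultimately show "nabla ` u \<subseteq> v"
    using meet_filter_top[OF v] unfolding mp_closed_def by blast
next
  assume "nabla ` u \<subseteq> v"
  show "mp_closed imp u v"
    unfolding mp_closed_def
  proof (intro allI impI)
    fix x y assume "imp x y \<in> u" "x \<in> v"
    with \<open>nabla ` u \<subseteq> v\<close> have "inf x (nabla (imp x y)) \<in> v"
      using meet_filter_inf_iff[OF v] by blast
    then show "y \<in> v" using meet_filter_up[OF v] temporal_modus_ponens[OF t] by blast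
  qed
qed

lemma mp_closed_imp_section:
  assumes sa: "strong_algebra imp" and u: "meet_filter u"
  shows "mp_closed imp u {c. imp a c \<in> u}"
  unfolding mp_closed_def using imp_mem_trans[OF sa u] by blast

text \<open>\<open>mp_closed imp u v\<close> need not be upward closed in \<open>v\<close> under inclusion, so the frame
  order strengthens inclusion just enough to make it so. In the presence of a temporal \<open>\<nabla>\<close> the
  extra clause is redundant (\<open>canonical_le_temporal\<close>).\<close>

definition canonical_le :: "('a \<Rightarrow> 'a \<Rightarrow> 'a) \<Rightarrow> 'a set set \<Rightarrow> 'a set \<Rightarrow> 'a set \<Rightarrow> bool" where
  "canonical_le imp W u v \<longleftrightarrow> u \<subseteq> v \<and> (\<forall>w\<in>W. mp_closed imp w u \<longrightarrow> mp_closed imp w v)"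

definition canonical_rel :: "('a \<Rightarrow> 'a \<Rightarrow> 'a) \<Rightarrow> 'a set set \<Rightarrow> ('a set \<times> 'a set) set" where
  "canonical_rel imp W = {(u, v). u \<in> W \<and> v \<in> W \<and> mp_closed imp u v}"

definition canonical_val :: "'a set set \<Rightarrow> 'a \<Rightarrow> 'a set set" where
  "canonical_val W a = {u \<in> W. a \<in> u}"

lemma kripke_frame_canonical: "kripke_frame W (canonical_le imp W) (canonical_rel imp W)"
  unfolding kripke_frame_def
proof (intro conjI ballI allI impI)
  fix u v u' v'
  assume "(u, v) \<in> canonical_rel imp W \<and> u' \<in> W \<and> v' \<in> W \<and>
    canonical_le imp W u' u \<and> canonical_le imp W v v'"
  then show "(u', v') \<in> canonical_rel imp W"
    unfolding canonical_rel_def canonical_le_def mp_closed_def by blast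
qed (auto simp: canonical_le_def canonical_rel_def)

locale filter_model =
  fixes imp :: "'a::bounded_semilattice_inf_top \<Rightarrow> 'a \<Rightarrow> 'a" and W :: "'a set set"
  assumes W_filters: "u \<in> W \<Longrightarrow> meet_filter u"
    and W_separates: "\<not> a \<le> b \<Longrightarrow> \<exists>u\<in>W. a \<in> u \<and> b \<notin> u"
    and W_imp_witness: "u \<in> W \<Longrightarrow> imp a b \<notin> u \<Longrightarrow> \<exists>v\<in>W. mp_closed imp u v \<and> a \<in> v \<and> b \<notin> v"
    and W_nabla_witness:
      "temporal imp nabla \<Longrightarrow> v \<in> W \<Longrightarrow> nabla a \<in> v \<Longrightarrow> \<exists>u\<in>W. a \<in> u \<and> nabla ` u \<subseteq> v"
    and W_serial: "temporal imp nabla \<Longrightarrow> alg_sat wF imp nabla \<Longrightarrow> u \<in> W \<Longrightarrow> \<exists>v\<in>W. mp_closed imp u v"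
    and W_vimage: "lattice_endo f \<Longrightarrow> u \<in> W \<Longrightarrow> f -` u \<in> W"
begin

abbreviation "le_W \<equiv> canonical_le imp W"
abbreviation "R_W \<equiv> canonical_rel imp W"
abbreviation "i_W \<equiv> canonical_val W"

lemma canonical_val_kimp: "i_W (imp a b) = kimp W R_W (i_W a) (i_W b)"
proof
  show "i_W (imp a b) \<subseteq> kimp W R_W (i_W a) (i_W b)"
    unfolding canonical_val_def kimp_def canonical_rel_def mp_closed_def by blast
  show "kimp W R_W (i_W a) (i_W b) \<subseteq> i_W (imp a b)"
  proof
    fix u assume u: "u \<in> kimp W R_W (i_W a) (i_W b)"
    then have "u \<in> W" unfolding kimp_def by blast
    show "u \<in> i_W (imp a b)"
    proof (rule ccontr)
      assume "u \<notin> i_W (imp a b)"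
      then obtain v where "v \<in> W" "mp_closed imp u v" "a \<in> v" "b \<notin> v"
        using W_imp_witness \<open>u \<in> W\<close> unfolding canonical_val_def by blast
      then show False
        using u \<open>u \<in> W\<close> unfolding kimp_def canonical_rel_def canonical_val_def by blast
    qed
  qed
qed

lemma canonical_val_le_iff: "a \<le> b \<longleftrightarrow> i_W a \<subseteq> i_W b"
proof
  show "a \<le> b \<Longrightarrow> i_W a \<subseteq> i_W b"
    unfolding canonical_val_def using W_filters meet_filter_up by blast
  show "i_W a \<subseteq> i_W b \<Longrightarrow> a \<le> b"
    unfolding canonical_val_def using W_separates by blast
qed

lemma embedding_props_canonical: "embedding_props imp W le_W R_W i_W"
  unfolding embedding_props_def
proof (intro conjI allI canonical_val_kimp canonical_val_le_iff)
  show "upset W le_W (i_W a)" for a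
    unfolding upset_def canonical_val_def canonical_le_def by blast
  show "i_W top = W"
    unfolding canonical_val_def using W_filters meet_filter_top by blast
  show "i_W (inf a b) = i_W a \<inter> i_W b" for a b
    unfolding canonical_val_def using W_filters meet_filter_inf_iff by blast
qed

context
  fixes nabla assumes t: "temporal imp nabla"
begin

lemma canonical_le_temporal: "u \<in> W \<Longrightarrow> v \<in> W \<Longrightarrow> le_W u v \<longleftrightarrow> u \<subseteq> v"
  unfolding canonical_le_def using mp_closed_iff_temporal[OF t] W_filters by blast

lemma canonical_rel_temporal: "(u, v) \<in> R_W \<longleftrightarrow> u \<in> W \<and> v \<in> W \<and> nabla ` u \<subseteq> v"
  unfolding canonical_rel_def using mp_closed_iff_temporal[OF t] W_filters by blast

lemma canonical_val_nabla: "i_W (nabla a) = knabla W R_W (i_W a)"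
proof
  show "i_W (nabla a) \<subseteq> knabla W R_W (i_W a)"
    unfolding canonical_val_def knabla_def canonical_rel_temporal
    using W_nabla_witness[OF t] by blast
  show "knabla W R_W (i_W a) \<subseteq> i_W (nabla a)"
    unfolding canonical_val_def knabla_def canonical_rel_temporal by blast
qed

lemma frame_sat_N:
  assumes "alg_sat N imp nabla"
  shows "frame_sat N W le_W R_W"
proof -
  have closed: "nabla -` v \<in> W" if "v \<in> W" for v
    using W_vimage[OF temporal_lattice_endo[OF t assms] that] .
  have "(u, v) \<in> R_W \<longleftrightarrow> le_W u (nabla -` v)" if "u \<in> W" "v \<in> W" for u v
    using that closed canonical_le_temporal canonical_rel_temporal
    by (simp add: image_subset_iff_subset_vimage)
  moreover have "le_W (nabla -` u) (nabla -` v)" if "u \<in> W" "v \<in> W" "le_W u v" for u v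
    using that closed canonical_le_temporal vimage_mono by metis
  ultimately show ?thesis
    unfolding frame_sat.simps by (intro exI[of _ "\<lambda>v. nabla -` v"]) (use closed in blast)
qed

lemma frame_sat_H:
  assumes "alg_sat H imp nabla"
  shows "frame_sat H W le_W R_W"
proof -
  text \<open>Under \<open>H\<close>, \<open>imp top\<close> is a two-sided inverse of \<open>\<nabla>\<close>:
    \<open>imp top (\<nabla> c) = \<nabla> (imp top c) \<le> c \<le> imp top (\<nabla> c)\<close>.\<close>
  have comm: "nabla (imp top c) = imp top (nabla c)" for c using assms by simp
  have "nabla (imp top c) \<le> c" for c by (simp add: temporal_adjoint[OF t])
  moreover have "c \<le> imp top (nabla c)" for c using temporal_adjoint[OF t, of c "nabla c"] by simp
  ultimately have nabla_g: "nabla (imp top c) = c" and g_nabla: "imp top (nabla c) = c" for c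
    using comm order.antisym by metis+
  have endo: "lattice_endo nabla" using assms temporal_lattice_endo[OF t] by simp
  have closed: "nabla -` v \<in> W" "imp top -` v \<in> W" if "v \<in> W" for v
    using W_vimage[OF endo that] W_vimage[OF lattice_endo_inverse[OF endo nabla_g g_nabla] that] .
  have left_inv: "imp top -` (nabla -` v) = v" and right_inv: "nabla -` (imp top -` v) = v" for v
    by (auto simp: nabla_g g_nabla)
  have "bij_betw (\<lambda>v. nabla -` v) W W"
    by (rule bij_betw_byWitness[where f' = "\<lambda>v. imp top -` v"])
      (auto simp: left_inv right_inv closed)
  moreover have "le_W u v \<longleftrightarrow> le_W (nabla -` u) (nabla -` v)" if "u \<in> W" "v \<in> W" for u v
  proof -
    have "u \<subseteq> v \<longleftrightarrow> nabla -` u \<subseteq> nabla -` v"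
      using vimage_mono[of "nabla -` u" "nabla -` v" "imp top"] by (auto simp: left_inv)
    then show ?thesis using that closed canonical_le_temporal by simp
  qed
  moreover have "(u, v) \<in> R_W \<longleftrightarrow> le_W u (nabla -` v)" if "u \<in> W" "v \<in> W" for u v
    using that closed canonical_le_temporal canonical_rel_temporal
    by (simp add: image_subset_iff_subset_vimage)
  ultimately show ?thesis
    unfolding frame_sat.simps by (intro exI[of _ "\<lambda>v. nabla -` v"]) blast
qed

lemma frame_sat_P:
  assumes "alg_sat P imp nabla"
  shows "frame_sat P W le_W R_W"
  unfolding frame_sat.simps
proof (intro ballI, clarify)
  fix u v assume uv: "(u, v) \<in> R_W"
  then have "u \<in> W" "v \<in> W" "nabla ` u \<subseteq> v" by (simp_all add: canonical_rel_temporal)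
  moreover have "x \<in> v" if "x \<in> u" for x
    using meet_filter_up[OF W_filters[OF \<open>v \<in> W\<close>]] \<open>nabla ` u \<subseteq> v\<close> that assms by auto
  ultimately show "le_W u v" using canonical_le_temporal by blast
qed

lemma frame_sat_F:
  assumes "alg_sat F imp nabla"
  shows "frame_sat F W le_W R_W"
  unfolding frame_sat.simps
proof
  fix u assume "u \<in> W"
  have "nabla x \<in> u" if "x \<in> u" for x
    using meet_filter_up[OF W_filters[OF \<open>u \<in> W\<close>] that] assms by simp
  then show "(u, u) \<in> R_W" using \<open>u \<in> W\<close> canonical_rel_temporal by blast
qed

lemma frame_sat_wF:
  assumes "alg_sat wF imp nabla"
  shows "frame_sat wF W le_W R_W"
  unfolding frame_sat.simps canonical_rel_def using W_serial[OF t assms] by blast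

lemma frame_sat_canonical: "alg_sat \<rho> imp nabla \<Longrightarrow> frame_sat \<rho> W le_W R_W"
  by (cases \<rho>) (simp_all only: frame_sat_N frame_sat_H frame_sat_P frame_sat_F frame_sat_wF)

end

theorem canonical_model:
  "kripke_frame W le_W R_W \<and> embedding_props imp W le_W R_W i_W \<and>
   (\<forall>nabla. temporal imp nabla \<longrightarrow>
      (\<forall>a. i_W (nabla a) = knabla W R_W (i_W a)) \<and>
      (\<forall>Rs :: cond set. (\<forall>\<rho>\<in>Rs. alg_sat \<rho> imp nabla) \<longrightarrow> (\<forall>\<rho>\<in>Rs. frame_sat \<rho> W le_W R_W)))"
  using kripke_frame_canonical embedding_props_canonical canonical_val_nabla frame_sat_canonical
  by blast

end

lemma filter_model_all_filters:
  assumes sa: "strong_algebra imp" and im: "internalizes_meets imp"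
  shows "filter_model imp {u. meet_filter u}"
proof
  show "\<exists>u\<in>{u. meet_filter u}. a \<in> u \<and> b \<notin> u" if "\<not> a \<le> b" for a b
    using that meet_filter_principal[of a] by auto
  show "\<exists>v\<in>{u. meet_filter u}. mp_closed imp u v \<and> a \<in> v \<and> b \<notin> v"
    if "u \<in> {u. meet_filter u}" "imp a b \<notin> u" for u a b
  proof (intro bexI conjI)
    have u: "meet_filter u" using that(1) by simp
    show "{c. imp a c \<in> u} \<in> {u. meet_filter u}"
      using meet_filter_imp_section[OF sa im u] by simp
    show "mp_closed imp u {c. imp a c \<in> u}" using mp_closed_imp_section[OF sa u] .
    show "a \<in> {c. imp a c \<in> u}" using imp_mem_of_le[OF sa u order.refl] by simp
    show "b \<notin> {c. imp a c \<in> u}" using that(2) by simp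
  qed
  show "\<exists>u\<in>{u. meet_filter u}. a \<in> u \<and> nabla ` u \<subseteq> v"
    if "temporal imp nabla" "v \<in> {u. meet_filter u}" "nabla a \<in> v" for nabla v a
  proof (intro bexI conjI)
    show "nabla ` {a..} \<subseteq> v"
      using that meet_filter_up temporal_mono by blast
  qed (use meet_filter_principal in auto)
  show "\<exists>v\<in>{u. meet_filter u}. mp_closed imp u v" for u
    using meet_filter_UNIV unfolding mp_closed_def by blast
qed (simp_all add: meet_filter_vimage)

lemma has_finite_joins_binary: "has_finite_joins TYPE('a::order) \<Longrightarrow> \<forall>a b::'a. \<exists>j. is_join a b j"
  unfolding has_finite_joins_def by blast

lemma entailment_le: "entailment ((\<le>) :: 'a::bounded_semilattice_inf_top \<Rightarrow> 'a \<Rightarrow> bool)"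
proof
  show "x \<le> w" if "x \<le> y" "y \<le> w" for x y w :: 'a using that by (rule order.trans)
  show "j \<le> w" if "x \<le> w" "y \<le> w" "is_join x y j" for x y j w :: 'a
    using that unfolding is_join_def by blast
qed simp_all

lemma entailment_imp_mem:
  assumes sa: "strong_algebra imp" and im: "internalizes_meets imp"
    and ij: "internalizes_joins imp" and u: "meet_filter u"
  shows "entailment (\<lambda>x y. imp x y \<in> u)"
proof
  show "imp j w \<in> u" if "imp x w \<in> u" "imp y w \<in> u" "is_join x y j" for x y j w
  proof -
    have "imp j w = inf (imp x w) (imp y w)"
      using ij that(3) unfolding internalizes_joins_def by blast
    then show ?thesis using that(1,2) meet_filter_inf_iff[OF u] by simp
  qed
  show "imp x y \<in> u" if "x \<le> y" for x y using imp_mem_of_le[OF sa u that] .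
  show "imp x w \<in> u" if "imp x y \<in> u" "imp y w \<in> u" for x y w
    using imp_mem_trans[OF sa u that] .
  show "imp x (inf y w) \<in> u" if "imp x y \<in> u" "imp x w \<in> u" for x y w
    using imp_mem_inf[OF im u that] .
qed

context
  fixes imp :: "'a::bounded_semilattice_inf_top \<Rightarrow> 'a \<Rightarrow> 'a"
  assumes sa: "strong_algebra imp" and im: "internalizes_meets imp"
    and hj: "has_finite_joins TYPE('a)" and dist: "distributive TYPE('a)"
    and ij: "internalizes_joins imp"
begin

lemma prime_filter_separation:
  fixes a b :: 'a
  assumes "\<not> a \<le> b"
  shows "\<exists>u. prime_filter u \<and> a \<in> u \<and> b \<notin> u"
proof -
  have "\<not> a \<le> c" if "c \<in> {..b}" for c
    using assms order.trans[of a c b] that by auto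
  then have "\<exists>u. prime_filter u \<and> (\<forall>x\<in>u. \<forall>y. x \<le> y \<longrightarrow> y \<in> u) \<and> a \<in> u \<and> u \<inter> {..b} = {}"
    using entailment.prime_filter_extension[OF entailment_le dist has_finite_joins_binary[OF hj]
        down_join_closed_atMost[of b], of b a] by blast
  then show ?thesis by blast
qed

lemma prime_filter_imp_witness:
  assumes u: "prime_filter u" and "imp a b \<notin> u"
  shows "\<exists>v. prime_filter v \<and> mp_closed imp u v \<and> a \<in> v \<and> b \<notin> v"
proof -
  have uf: "meet_filter u" using u unfolding prime_filter_def by blast
  have "imp a c \<notin> u" if "c \<in> {..b}" for c
    using assms(2) meet_filter_up[OF uf] strong_algebra_mono[OF sa] that by auto
  then have "\<exists>v. prime_filter v \<and> (\<forall>x\<in>v. \<forall>y. imp x y \<in> u \<longrightarrow> y \<in> v) \<and> a \<in> v \<and>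
      v \<inter> {..b} = {}"
    using entailment.prime_filter_extension[OF entailment_imp_mem[OF sa im ij uf] dist
        has_finite_joins_binary[OF hj] down_join_closed_atMost[of b], of b a] by blast
  then show ?thesis unfolding mp_closed_def by blast
qed

lemma prime_filter_nabla_witness:
  assumes t: "temporal imp nabla" and v: "prime_filter v" and "nabla a \<in> v"
  shows "\<exists>u. prime_filter u \<and> a \<in> u \<and> nabla ` u \<subseteq> v"
proof -
  have vf: "meet_filter v" using v unfolding prime_filter_def by blast
  obtain z :: 'a where z: "is_least z" using hj unfolding has_finite_joins_def by blast
  let ?I = "{x. nabla x \<notin> v}"
  have "z \<in> ?I"
    using v z left_adjoint_least[OF temporal_adjoint[OF t]] unfolding prime_filter_def by simp
  have "y \<in> ?I" if "x \<in> ?I" "y \<le> x" for x y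
    using that meet_filter_up[OF vf] temporal_mono[OF t] by blast
  moreover have "j \<in> ?I" if "x \<in> ?I" "y \<in> ?I" "is_join x y j" for x y j
    using that v left_adjoint_is_join[OF temporal_adjoint[OF t]] unfolding prime_filter_def by blast
  ultimately have I: "down_join_closed ?I" unfolding down_join_closed_def by blast
  have "\<not> a \<le> c" if "c \<in> ?I" for c
    using that \<open>nabla a \<in> v\<close> meet_filter_up[OF vf] temporal_mono[OF t] by blast
  then have "\<exists>u. prime_filter u \<and> (\<forall>x\<in>u. \<forall>y. x \<le> y \<longrightarrow> y \<in> u) \<and> a \<in> u \<and> u \<inter> ?I = {}"
    using entailment.prime_filter_extension
        [OF entailment_le dist has_finite_joins_binary[OF hj] I \<open>z \<in> ?I\<close>]
    by blast
  then show ?thesis by blast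
qed

lemma prime_filter_serial:
  assumes t: "temporal imp nabla" and "alg_sat wF imp nabla" and u: "prime_filter u"
  shows "\<exists>v. prime_filter v \<and> mp_closed imp u v"
proof -
  obtain z where z: "is_least z" and reflects: "\<And>a. nabla a = z \<Longrightarrow> a = z"
    using assms(2) by auto
  text \<open>\<open>\<nabla> (imp top z) \<le> z\<close>, so \<open>wF\<close> forces \<open>imp top z = z\<close>, which no prime filter contains.\<close>
  have "nabla (imp top z) = z"
    using temporal_adjoint[OF t] z unfolding is_least_def by (meson order.antisym order.refl)
  then have "imp top z \<notin> u" using reflects z u unfolding prime_filter_def by metis
  then show ?thesis using prime_filter_imp_witness[OF u] by blast
qed

lemma filter_model_prime_filters: "filter_model imp {u. prime_filter u}"
proof
  show "u \<in> {u. prime_filter u} \<Longrightarrow> meet_filter u" for u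
    unfolding prime_filter_def by blast
  show "\<not> a \<le> b \<Longrightarrow> \<exists>u\<in>{u. prime_filter u}. a \<in> u \<and> b \<notin> u" for a b :: 'a
    using prime_filter_separation by blast
  show "u \<in> {u. prime_filter u} \<Longrightarrow> imp a b \<notin> u \<Longrightarrow>
      \<exists>v\<in>{u. prime_filter u}. mp_closed imp u v \<and> a \<in> v \<and> b \<notin> v" for u a b
    using prime_filter_imp_witness by blast
  show "temporal imp nabla \<Longrightarrow> v \<in> {u. prime_filter u} \<Longrightarrow> nabla a \<in> v \<Longrightarrow>
      \<exists>u\<in>{u. prime_filter u}. a \<in> u \<and> nabla ` u \<subseteq> v" for nabla v a
    using prime_filter_nabla_witness[of nabla v a] by auto
  show "temporal imp nabla \<Longrightarrow> alg_sat wF imp nabla \<Longrightarrow> u \<in> {u. prime_filter u} \<Longrightarrow>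
      \<exists>v\<in>{u. prime_filter u}. mp_closed imp u v" for nabla u
    using prime_filter_serial[of nabla u] by auto
  show "lattice_endo f \<Longrightarrow> u \<in> {u. prime_filter u} \<Longrightarrow> f -` u \<in> {u. prime_filter u}" for f u
    using prime_filter_vimage[of f u] by simp
qed

end

lemma canonical_val_prime_filters_joins:
  "preserves_finite_joins (canonical_val {u. prime_filter u})"
  unfolding preserves_finite_joins_def
proof (intro conjI allI impI)
  show "canonical_val {u. prime_filter u} z = {}" if "is_least z" for z
    using that unfolding canonical_val_def prime_filter_def by blast
  show "canonical_val {u. prime_filter u} j =
      canonical_val {u. prime_filter u} a \<union> canonical_val {u. prime_filter u} b"
    if j: "is_join a b j" for a b j
  proof -
    have "a \<le> j" "b \<le> j" using j unfolding is_join_def by blast+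
    then show ?thesis
      using j meet_filter_up unfolding canonical_val_def prime_filter_def by blast
  qed
qed

theorem theorem8p7:
  fixes imp :: "'a::bounded_semilattice_inf_top \<Rightarrow> 'a \<Rightarrow> 'a"
  assumes "strong_algebra imp" and "internalizes_meets imp"
  shows "\<exists>(W :: 'a set set) leW R (i :: 'a \<Rightarrow> 'a set set).
           kripke_frame W leW R \<and> embedding_props imp W leW R i \<and>
           ((has_finite_joins TYPE('a) \<and> distributive TYPE('a) \<and> internalizes_joins imp)
              \<longrightarrow> preserves_finite_joins i) \<and>
           (\<forall>nabla. temporal imp nabla \<longrightarrow>
              (\<forall>a. i (nabla a) = knabla W R (i a)) \<and>
              (\<forall>Rs :: cond set. (\<forall>\<rho>\<in>Rs. alg_sat \<rho> imp nabla) \<longrightarrow> (\<forall>\<rho>\<in>Rs. frame_sat \<rho> W leW R)))"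
proof -
  let ?joins = "has_finite_joins TYPE('a) \<and> distributive TYPE('a) \<and> internalizes_joins imp"
  obtain W where model: "filter_model imp W"
    and joins: "?joins \<longrightarrow> preserves_finite_joins (canonical_val W)"
  proof (cases ?joins)
    case True
    then show ?thesis
      using that filter_model_prime_filters[OF assms] canonical_val_prime_filters_joins by blast
  next
    case False
    then show ?thesis using that filter_model_all_filters[OF assms] by blast
  qed
  show ?thesis
    using filter_model.canonical_model[OF model] joins
    by (intro exI[of _ W] exI[of _ "canonical_le imp W"] exI[of _ "canonical_rel imp W"]
        exI[of _ "canonical_val W"]) blast
qed

end
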